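(* Let $X$ be a two-parameter Lévy process on $\mathbb{R}^d$ with exponent $\psi$ and let $\alpha(t)=(x(t),y(t))_{t\in T}$ be a decreasing path. Then for any $n\ge1$ and $t_1<\cdots<t_n$ in $T$, the characteristic function $\phi_{t_1,\ldots,t_n}$ of the $\mathbb{R}^{nd}$-valued random variable $(X_{x(t_k),y(t_k)})_{k=1,\ldots,n}$ is given, for $z=(z_k)_{k=1,\ldots,n}$ with $z_k\in\mathbb{R}^d$, by $$\phi_{t_1,\ldots,t_n}(z)=\exp\Bigg[\sum_{i=1}^n\sum_{j=1}^{n-i+1}(x(t_i)-x(t_{i-1}))(y(t_{i+j-1})-y(t_{i+j}))\,\psi\Big(\sum_{k=i}^{i+j-1}z_k\Big)\Bigg],$$ with the convention $x(t_0)=y(t_{n+1})=0$.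
   Context: For $s,t\in\mathbb{R}_+^2$ with $s_1\le t_1$, $s_2\le t_2$, the rectangle $(s,t]$ is $(s_1,t_1]\times(s_2,t_2]$, and the increment of $X$ over it is $X((s,t])=X_{t_1,t_2}-X_{s_1,t_2}-X_{t_1,s_2}+X_{s_1,s_2}$. A two-parameter Lévy process on $\mathbb{R}^d$ is an $\mathbb{R}^d$-valued process $X=\{X_t:t\in\mathbb{R}_+^2\}$ such that: increments over finitely many disjoint rectangles are independent; $X(B)$ and $X(B+p)$ have the same law for every rectangle $B$ and $p\in\mathbb{R}_+^2$; $X$ vanishes on the axes a.s.; $X$ is continuous in probability; and its sample paths are a.s. right continuous with quadrantal limits. Its exponent is the unique Lévy–Khintchine exponent $\psi$ with $E[e^{i\langle z,X(B)\rangle}]=e^{m(B)\psi(z)}$ for every rectangle $B$, $m$ Lebesgue measure. $T\subseteq\mathbb{R}$ is an interval with interior $T^\circ$. A decreasing path is $\alpha(t)=(x(t),y(t))_{t\in T}$ with $x$ nondecreasing and $y$ nonincreasing continuous functions on $T$, both strictly positive on $T^\circ$, at least one not identically constant. *)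

theory Defs
  imports "HOL-Probability.Probability"
begin

definition quadrant :: "(real \<times> real) set" where
  "quadrant = {p. 0 \<le> fst p \<and> 0 \<le> snd p}"

definition is_rect :: "real \<times> real \<Rightarrow> real \<times> real \<Rightarrow> bool" where
  "is_rect s t \<longleftrightarrow> s \<in> quadrant \<and> t \<in> quadrant \<and> fst s \<le> fst t \<and> snd s \<le> snd t"

definition rect :: "real \<times> real \<Rightarrow> real \<times> real \<Rightarrow> (real \<times> real) set" where
  "rect s t = {fst s<..fst t} \<times> {snd s<..snd t}"

definition rect_incr :: "(real \<times> real \<Rightarrow> 'a \<Rightarrow> 'v::real_vector) \<Rightarrow> real \<times> real \<Rightarrow> real \<times> real \<Rightarrow> 'a \<Rightarrow> 'v" where
  "rect_incr X s t \<omega> = X (fst t, snd t) \<omega> - X (fst s, snd t) \<omega> - X (fst t, snd s) \<omega> + X (fst s, snd s) \<omega>"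

text \<open>The four (closed/open) quadrants at t used for quadrantal limits; a = True means s1 >= t1,
  a = False means s1 < t1, likewise b for the second coordinate.\<close>
definition quadrant_at :: "bool \<Rightarrow> bool \<Rightarrow> real \<times> real \<Rightarrow> (real \<times> real) set" where
  "quadrant_at a b t = {s \<in> quadrant.
      (if a then fst t \<le> fst s else fst s < fst t) \<and> (if b then snd t \<le> snd s else snd s < snd t)}"

definition two_param_levy :: "'a measure \<Rightarrow> (real \<times> real \<Rightarrow> 'a \<Rightarrow> 'v::euclidean_space) \<Rightarrow> bool" where
  "two_param_levy M X \<longleftrightarrow>
     prob_space M \<and>
     (\<forall>t\<in>quadrant. X t \<in> borel_measurable M) \<and>
     \<comment> \<open>independent increments over finitely many disjoint rectangles\<close>
     (\<forall>(I::nat set) s t. finite I \<and> (\<forall>i\<in>I. is_rect (s i) (t i)) \<and>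
         disjoint_family_on (\<lambda>i. rect (s i) (t i)) I \<longrightarrow>
         prob_space.indep_vars M (\<lambda>_. borel) (\<lambda>i. rect_incr X (s i) (t i)) I) \<and>
     \<comment> \<open>stationary increments\<close>
     (\<forall>s t p. is_rect s t \<and> p \<in> quadrant \<longrightarrow>
         distr M borel (rect_incr X s t) =
         distr M borel (rect_incr X (fst s + fst p, snd s + snd p) (fst t + fst p, snd t + snd p))) \<and>
     \<comment> \<open>vanishes on the axes a.s.\<close>
     (AE \<omega> in M. \<forall>t\<in>quadrant. (fst t = 0 \<or> snd t = 0) \<longrightarrow> X t \<omega> = 0) \<and>
     \<comment> \<open>continuity in probability\<close>
     (\<forall>t\<in>quadrant. \<forall>e>0.
         ((\<lambda>s. measure M {\<omega> \<in> space M. e < dist (X s \<omega>) (X t \<omega>)}) \<longlongrightarrow> 0) (at t within quadrant)) \<and>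
     \<comment> \<open>right continuous sample paths with quadrantal limits, a.s.\<close>
     (AE \<omega> in M. \<forall>t\<in>quadrant.
         ((\<lambda>s. X s \<omega>) \<longlongrightarrow> X t \<omega>) (at t within quadrant_at True True t) \<and>
         (\<forall>a b. \<exists>l. ((\<lambda>s. X s \<omega>) \<longlongrightarrow> l) (at t within quadrant_at a b t)))"

definition lk_exponent :: "('v::euclidean_space \<Rightarrow> complex) \<Rightarrow> bool" where
  "lk_exponent \<psi> \<longleftrightarrow> (\<exists>(a::'v) (Q::'v \<Rightarrow> 'v) (\<nu>::'v measure).
      linear Q \<and> (\<forall>u v. Q u \<bullet> v = u \<bullet> Q v) \<and> (\<forall>u. 0 \<le> Q u \<bullet> u) \<and>
      sets \<nu> = sets borel \<and> emeasure \<nu> {0} = 0 \<and>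
      integrable \<nu> (\<lambda>x. min 1 ((norm x)\<^sup>2)) \<and>
      (\<forall>z. \<psi> z = \<i> * complex_of_real (a \<bullet> z) - complex_of_real (Q z \<bullet> z / 2)
          + (\<integral>x. (cis (z \<bullet> x) - 1 - \<i> * complex_of_real ((z \<bullet> x) * indicator (cball 0 1) x)) \<partial>\<nu>)))"

definition levy_exponent :: "'a measure \<Rightarrow> (real \<times> real \<Rightarrow> 'a \<Rightarrow> 'v::euclidean_space) \<Rightarrow> ('v \<Rightarrow> complex) \<Rightarrow> bool" where
  "levy_exponent M X \<psi> \<longleftrightarrow> lk_exponent \<psi> \<and>
     (\<forall>s t z. is_rect s t \<longrightarrow>
        prob_space.expectation M (\<lambda>\<omega>. cis (z \<bullet> rect_incr X s t \<omega>)) =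
        exp (complex_of_real (measure lborel (rect s t)) * \<psi> z))"

definition decreasing_path :: "real set \<Rightarrow> (real \<Rightarrow> real) \<Rightarrow> (real \<Rightarrow> real) \<Rightarrow> bool" where
  "decreasing_path T x y \<longleftrightarrow> is_interval T \<and>
     continuous_on T x \<and> continuous_on T y \<and>
     monotone_on T (\<le>) (\<le>) x \<and> monotone_on T (\<le>) (\<ge>) y \<and>
     (\<forall>t\<in>interior T. 0 < x t \<and> 0 < y t) \<and>
     (\<not> (\<exists>c. \<forall>t\<in>T. x t = c) \<or> \<not> (\<exists>c. \<forall>t\<in>T. y t = c))"

definition path_x :: "(real \<Rightarrow> real) \<Rightarrow> (nat \<Rightarrow> real) \<Rightarrow> nat \<Rightarrow> real" where
  "path_x x tt i = (if i = 0 then 0 else x (tt i))"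

definition path_y :: "(real \<Rightarrow> real) \<Rightarrow> (nat \<Rightarrow> real) \<Rightarrow> nat \<Rightarrow> nat \<Rightarrow> real" where
  "path_y y tt n i = (if i = n + 1 then 0 else y (tt i))"

end

theory Submission
  imports Defs
begin

text \<open>Write A_i = x(t_i) and B_l = y(t_l), with A_0 = B_(n+1) = 0. Along a decreasing path A is
  nondecreasing and B nonincreasing, so the rectangles R_il = (A_(i-1), A_i] \<times> (B_(l+1), B_l],
  1 \<le> i \<le> l \<le> n, are pairwise disjoint, and (0, A_k] \<times> (0, B_k] is the union of those with
  i \<le> k \<le> l. As X vanishes on the axes, X(A_k, B_k) is a.s. the sum of the increments X(R_il) with
  i \<le> k \<le> l, so \<Sum>_k <z_k, X(A_k, B_k)> = \<Sum>_(i \<le> l) <z_i + ... + z_l, X(R_il)>. Increments over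
  disjoint rectangles are independent, hence the characteristic function is the product of the
  factors exp (m(R_il) \<psi>(z_i + ... + z_l)), where m(R_il) = (A_i - A_(i-1)) (B_l - B_(l+1)).\<close>

lemma nonneg_if_pos_on_interior:
  fixes f :: "real \<Rightarrow> real"
  assumes T: "is_interval T" and c: "continuous_on T f" and pos: "\<forall>s\<in>interior T. 0 < f s"
    and t: "t \<in> T" and u: "u \<in> T" and ne: "u \<noteq> t"
  shows "0 \<le> f t"
proof -
  define S where "S = (if t < u then {t<..<u} else {u<..<t})"
  have iv: "\<And>a b v. a \<in> T \<Longrightarrow> b \<in> T \<Longrightarrow> a \<le> v \<Longrightarrow> v \<le> b \<Longrightarrow> v \<in> T"
    using T unfolding is_interval_1 by blast
  have ST: "S \<subseteq> T"
  proof
    fix v assume "v \<in> S"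
    then show "v \<in> T" using iv[OF t u, of v] iv[OF u t, of v] unfolding S_def
      by (cases "t < u") auto
  qed
  have "open S" unfolding S_def by auto
  then have SI: "S \<subseteq> interior T" using ST interior_maximal by blast
  have lim: "(f \<longlongrightarrow> f t) (at t within T)" using c t by (simp add: continuous_on_def)
  then have lim2: "(f \<longlongrightarrow> f t) (at t within S)" using ST tendsto_within_subset by blast
  have nb: "at t within S \<noteq> bot"
  proof (cases "t < u")
    case True
    then have "t \<in> closure S" unfolding S_def by simp
    then show ?thesis using True unfolding S_def by (simp add: trivial_limit_within islimpt_in_closure)
  next
    case False
    then have "u < t" using ne by simp
    then have "t \<in> closure S" unfolding S_def by simp
    then show ?thesis using False unfolding S_def by (simp add: trivial_limit_within islimpt_in_closure)
  qed
  have ev: "eventually (\<lambda>s. 0 \<le> f s) (at t within S)"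
    unfolding eventually_at_filter
    by (rule always_eventually) (use SI pos in \<open>fastforce\<close>)
  show ?thesis using tendsto_lowerbound[OF lim2 ev nb] .
qed

lemma monotone_on_atLeastAtMost_SucI:
  fixes f :: "nat \<Rightarrow> 'a"
  assumes "reflp R" "transp R" and "\<And>k. m \<le> k \<Longrightarrow> k < n \<Longrightarrow> R (f k) (f (Suc k))"
  shows "monotone_on {m..n} (\<le>) R f"
proof (rule monotone_onI)
  fix i j assume "i \<in> {m..n}" "j \<in> {m..n}" "i \<le> j"
  from \<open>i \<le> j\<close> \<open>j \<in> {m..n}\<close> show "R (f i) (f j)"
  proof (induction j rule: dec_induct)
    case base
    then show ?case using assms(1) by (simp add: reflpD)
  next
    case (step j)
    have "R (f i) (f j)" using step \<open>i \<in> {m..n}\<close> by simp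
    moreover have "R (f j) (f (Suc j))" using assms(3) step \<open>i \<in> {m..n}\<close> by simp
    ultimately show ?case by (rule transpD[OF assms(2)])
  qed
qed

lemma decreasing_path_nonneg:
  assumes "decreasing_path T x y" "t \<in> T"
  shows "0 \<le> x t" "0 \<le> y t"
proof -
  have path: "is_interval T" "continuous_on T x" "continuous_on T y"
    "\<forall>s\<in>interior T. 0 < x s" "\<forall>s\<in>interior T. 0 < y s"
    using assms(1) unfolding decreasing_path_def by (elim conjE; simp)+
  \<comment> \<open>positivity holds only on the interior, so a second point of \<open>T\<close> is needed\<close>
  have "\<exists>u\<in>T. u \<noteq> t"
  proof (rule ccontr)
    assume "\<not> (\<exists>u\<in>T. u \<noteq> t)"
    then have "\<forall>s\<in>T. x s = x t" "\<forall>s\<in>T. y s = y t" by auto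
    moreover have "(\<nexists>c. \<forall>s\<in>T. x s = c) \<or> (\<nexists>c. \<forall>s\<in>T. y s = c)"
      using assms(1) unfolding decreasing_path_def by (elim conjE) assumption
    ultimately show False by metis
  qed
  then obtain u where u: "u \<in> T" "u \<noteq> t" by blast
  show "0 \<le> x t" "0 \<le> y t"
    using nonneg_if_pos_on_interior[OF path(1,2,4) assms(2) u] nonneg_if_pos_on_interior[OF path(1,3,5) assms(2) u]
    by simp_all
qed

lemma decreasing_path_staircase:
  assumes path: "decreasing_path T x y"
    and tt: "\<forall>k\<in>{1..n}. tt k \<in> T" "\<forall>k\<in>{1..<n}. tt k < tt (Suc k)"
  shows "mono_on {0..n} (path_x x tt)" "antimono_on {1..Suc n} (path_y y tt n)"
proof -
  have x: "mono_on T x" and y: "antimono_on T y"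
    using path unfolding decreasing_path_def by auto
  have step: "tt k \<in> T" "tt (Suc k) \<in> T" "tt k < tt (Suc k)" if "1 \<le> k" "k < n" for k
    using tt that by auto
  show "mono_on {0..n} (path_x x tt)"
  proof (rule monotone_on_atLeastAtMost_SucI)
    fix k assume "0 \<le> k" "k < n"
    show "path_x x tt k \<le> path_x x tt (Suc k)"
    proof (cases "k = 0")
      case True
      then show ?thesis
        using decreasing_path_nonneg(1)[OF path] tt(1) \<open>k < n\<close> by (simp add: path_x_def)
    next
      case False
      then show ?thesis
        using monotone_onD[OF x] step[of k] \<open>k < n\<close> by (simp add: path_x_def)
    qed
  qed (auto simp: reflp_def transp_def)
  show "antimono_on {1..Suc n} (path_y y tt n)"
  proof (rule monotone_on_atLeastAtMost_SucI)
    fix l assume "1 \<le> l" "l < Suc n"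
    show "path_y y tt n l \<ge> path_y y tt n (Suc l)"
    proof (cases "l = n")
      case True
      then show ?thesis
        using decreasing_path_nonneg(2)[OF path] tt(1) \<open>1 \<le> l\<close> by (simp add: path_y_def)
    next
      case False
      then show ?thesis
        using monotone_onD[OF y] step[of l] \<open>1 \<le> l\<close> \<open>l < Suc n\<close> by (simp add: path_y_def)
    qed
  qed (auto simp: reflp_def transp_def)
qed

lemma measure_lborel_rect:
  assumes "fst s \<le> fst t" "snd s \<le> snd t"
  shows "measure lborel (rect s t) = (fst t - fst s) * (snd t - snd s)"
proof -
  have "emeasure lborel (rect s t) = emeasure lborel {fst s<..fst t} * emeasure lborel {snd s<..snd t}"
    unfolding rect_def lborel_prod[symmetric] by (rule lborel.emeasure_pair_measure_Times) auto
  then show ?thesis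
    using assms by (simp add: measure_def ennreal_mult'[symmetric] enn2real_mult)
qed

lemma borel_measurable_cis [measurable]:
  "f \<in> borel_measurable M \<Longrightarrow> (\<lambda>x. cis (f x)) \<in> borel_measurable M"
  by (rule measurable_compose[where f=f], assumption, rule borel_measurable_continuous_onI)
    (intro continuous_intros)

lemma cis_sum: "cis (\<Sum>x\<in>S. f x) = (\<Prod>x\<in>S. cis (f x))"
  by (cases "finite S") (simp_all add: cis_conv_exp sum_distrib_left exp_sum)

lemma (in prob_space) indep_sets_reindex:
  assumes "inj_on h I" "indep_sets F (h ` I)"
  shows "indep_sets (\<lambda>i. F (h i)) I"
proof (rule indep_setsI)
  show "F (h i) \<subseteq> events" if "i \<in> I" for i
    using assms(2) that unfolding indep_sets_def by blast
next
  fix A J assume J: "J \<noteq> {}" "J \<subseteq> I" "finite J" "\<forall>j\<in>J. A j \<in> F (h j)"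
  have inj: "inj_on h J" using assms(1) J(2) by (rule inj_on_subset)
  define B where "B k = A (the_inv_into J h k)" for k
  have B: "B (h j) = A j" if "j \<in> J" for j
    unfolding B_def using the_inv_into_f_f[OF inj that] by simp
  have "prob (\<Inter>k\<in>h ` J. B k) = (\<Prod>k\<in>h ` J. prob (B k))"
    using J B by (intro indep_setsD[OF assms(2)]) auto
  then show "prob (\<Inter>j\<in>J. A j) = (\<Prod>j\<in>J. prob (A j))"
    using B by (simp add: prod.reindex[OF inj])
qed

lemma (in prob_space) indep_vars_reindex:
  assumes "inj_on h I" "indep_vars M' X (h ` I)"
  shows "indep_vars (\<lambda>i. M' (h i)) (\<lambda>i. X (h i)) I"
  using assms unfolding indep_vars_def2
  by (auto intro: indep_sets_reindex[where F="\<lambda>i. {X i -` A \<inter> space M | A. A \<in> sets (M' i)}"])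

lemma rect_incr_measurable:
  assumes "two_param_levy M X" "is_rect s t"
  shows "rect_incr X s t \<in> borel_measurable M"
proof -
  have "\<And>p. p \<in> quadrant \<Longrightarrow> X p \<in> borel_measurable M"
    using assms(1) unfolding two_param_levy_def by blast
  moreover have "(fst s, snd t) \<in> quadrant" "(fst t, snd s) \<in> quadrant"
    "(fst t, snd t) \<in> quadrant" "(fst s, snd s) \<in> quadrant"
    using assms(2) unfolding is_rect_def quadrant_def by auto
  ultimately show ?thesis
    unfolding rect_incr_def by measurable
qed

lemma two_param_levy_indep_rect_incr:
  fixes P :: "'i::countable set"
  assumes "two_param_levy M X" "finite P" "\<forall>p\<in>P. is_rect (s p) (t p)"
    and "disjoint_family_on (\<lambda>p. rect (s p) (t p)) P"
  shows "prob_space.indep_vars M (\<lambda>_. borel) (\<lambda>p. rect_incr X (s p) (t p)) P"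
proof -
  interpret prob_space M using assms(1) unfolding two_param_levy_def by blast
  \<comment> \<open>the independence axiom only speaks of index sets of naturals\<close>
  have "indep_vars (\<lambda>_. borel) (\<lambda>m. rect_incr X (s (from_nat m)) (t (from_nat m))) (to_nat ` P)"
    using assms unfolding two_param_levy_def disjoint_family_on_def by auto
  from indep_vars_reindex[OF inj_on_to_nat this] show ?thesis
    by simp
qed

theorem two_param_levy_char_fun_rect_incr:
  fixes P :: "'i::countable set"
  assumes "two_param_levy M X" "levy_exponent M X \<psi>"
    and "finite P" "\<forall>p\<in>P. is_rect (s p) (t p)"
    and "disjoint_family_on (\<lambda>p. rect (s p) (t p)) P"
  shows "prob_space.expectation M (\<lambda>\<omega>. cis (\<Sum>p\<in>P. w p \<bullet> rect_incr X (s p) (t p) \<omega>)) =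
    exp (\<Sum>p\<in>P. complex_of_real (measure lborel (rect (s p) (t p))) * \<psi> (w p))"
proof -
  interpret prob_space M using assms(1) unfolding two_param_levy_def by blast
  have cis_meas: "(\<lambda>\<omega>. cis (w p \<bullet> rect_incr X (s p) (t p) \<omega>)) \<in> borel_measurable M" if "p \<in> P" for p
  proof -
    have "rect_incr X (s p) (t p) \<in> borel_measurable M"
      using rect_incr_measurable[OF assms(1)] assms(4) that by blast
    then show ?thesis by measurable
  qed
  have "indep_vars (\<lambda>_. borel) (\<lambda>p \<omega>. cis (w p \<bullet> rect_incr X (s p) (t p) \<omega>)) P"
    using two_param_levy_indep_rect_incr[OF assms(1,3-5)] by (rule indep_vars_compose2) measurable
  then have "expectation (\<lambda>\<omega>. \<Prod>p\<in>P. cis (w p \<bullet> rect_incr X (s p) (t p) \<omega>)) =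
      (\<Prod>p\<in>P. expectation (\<lambda>\<omega>. cis (w p \<bullet> rect_incr X (s p) (t p) \<omega>)))"
    using cis_meas by (intro indep_vars_lebesgue_integral assms(3) integrable_const_bound[where B=1]) auto
  also have "\<dots> = (\<Prod>p\<in>P. exp (complex_of_real (measure lborel (rect (s p) (t p))) * \<psi> (w p)))"
  proof (intro prod.cong[OF refl])
    fix p assume "p \<in> P"
    then have "is_rect (s p) (t p)" using assms(4) by blast
    then show "expectation (\<lambda>\<omega>. cis (w p \<bullet> rect_incr X (s p) (t p) \<omega>)) =
        exp (complex_of_real (measure lborel (rect (s p) (t p))) * \<psi> (w p))"
      using assms(2) unfolding levy_exponent_def by blast
  qed
  finally show ?thesis
    by (simp add: cis_sum exp_sum[OF assms(3)])
qed

lemma sum_triangle_swap: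
  fixes f :: "nat \<Rightarrow> nat \<Rightarrow> nat \<Rightarrow> 'a::comm_monoid_add"
  shows "(\<Sum>k=1..n. \<Sum>i=1..k. \<Sum>l=k..n. f k i l) = (\<Sum>i=1..n. \<Sum>l=i..n. \<Sum>k=i..l. f k i l)"
proof -
  have "(\<Sum>k=1..n. \<Sum>i=1..k. \<Sum>l=k..n. f k i l) =
      (\<Sum>(k, i, l)\<in>(SIGMA k:{1..n}. SIGMA i:{1..k}. {k..n}). f k i l)"
    by (simp add: sum.Sigma split_def)
  also have "\<dots> = (\<Sum>(i, l, k)\<in>(SIGMA i:{1..n}. SIGMA l:{i..n}. {i..l}). f k i l)"
    by (rule sum.reindex_bij_witness[where i="\<lambda>(i, l, k). (k, i, l)" and j="\<lambda>(k, i, l). (i, l, k)"])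
      auto
  also have "\<dots> = (\<Sum>i=1..n. \<Sum>l=i..n. \<Sum>k=i..l. f k i l)"
    by (simp add: sum.Sigma split_def)
  finally show ?thesis .
qed

lemma grid_telescope:
  fixes G :: "nat \<Rightarrow> nat \<Rightarrow> 'a::ab_group_add"
  assumes "\<And>l. k \<le> l \<Longrightarrow> l \<le> Suc n \<Longrightarrow> G 0 l = 0" "G k (Suc n) = 0" "k \<le> n"
  shows "G k k = (\<Sum>i=1..k. \<Sum>l=k..n. G i l - G (i - 1) l - G i (Suc l) + G (i - 1) (Suc l))"
proof -
  have telescope: "(\<Sum>i=1..k. g i - g (i - 1)) = g k - g 0" for g :: "nat \<Rightarrow> 'a"
    by (induction k) (auto simp: sum.cl_ivl_Suc)
  have "(\<Sum>i=1..k. \<Sum>l=k..n. G i l - G (i - 1) l - G i (Suc l) + G (i - 1) (Suc l)) =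
      (\<Sum>l=k..n. \<Sum>i=1..k. (G i l - G i (Suc l)) - (G (i - 1) l - G (i - 1) (Suc l)))"
    by (subst sum.swap) (simp add: algebra_simps)
  also have "\<dots> = (\<Sum>l=k..n. G k l - G k (Suc l))"
  proof (rule sum.cong[OF refl])
    fix l assume "l \<in> {k..n}"
    then show "(\<Sum>i=1..k. (G i l - G i (Suc l)) - (G (i - 1) l - G (i - 1) (Suc l))) = G k l - G k (Suc l)"
      using telescope[of "\<lambda>i. G i l - G i (Suc l)"] assms(1) by simp
  qed
  also have "\<dots> = G k k"
    using sum_Suc_diff[of k n "\<lambda>l. - G k l"] assms(2,3) by simp
  finally show ?thesis ..
qed

lemma staircase_decomposition:
  fixes G :: "nat \<Rightarrow> nat \<Rightarrow> 'a::real_inner"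
  assumes "\<And>l. 1 \<le> l \<Longrightarrow> l \<le> Suc n \<Longrightarrow> G 0 l = 0" "\<And>i. i \<le> n \<Longrightarrow> G i (Suc n) = 0"
  shows "(\<Sum>k=1..n. z k \<bullet> G k k) =
    (\<Sum>i=1..n. \<Sum>l=i..n. (\<Sum>k=i..l. z k) \<bullet> (G i l - G (i - 1) l - G i (Suc l) + G (i - 1) (Suc l)))"
proof -
  have "(\<Sum>k=1..n. z k \<bullet> G k k) =
      (\<Sum>k=1..n. \<Sum>i=1..k. \<Sum>l=k..n. z k \<bullet> (G i l - G (i - 1) l - G i (Suc l) + G (i - 1) (Suc l)))"
  proof (rule sum.cong[OF refl])
    fix k assume "k \<in> {1..n}"
    then have "G k k = (\<Sum>i=1..k. \<Sum>l=k..n. G i l - G (i - 1) l - G i (Suc l) + G (i - 1) (Suc l))"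
      using assms by (intro grid_telescope) auto
    then show "z k \<bullet> G k k = (\<Sum>i=1..k. \<Sum>l=k..n. z k \<bullet> (G i l - G (i - 1) l - G i (Suc l) + G (i - 1) (Suc l)))"
      by (simp add: inner_sum_right)
  qed
  also have "\<dots> = (\<Sum>i=1..n. \<Sum>l=i..n. \<Sum>k=i..l. z k \<bullet> (G i l - G (i - 1) l - G i (Suc l) + G (i - 1) (Suc l)))"
    by (rule sum_triangle_swap)
  finally show ?thesis
    by (simp add: inner_sum_left)
qed

lemma rect_disjointI:
  assumes "fst t \<le> fst s' \<or> fst t' \<le> fst s \<or> snd t \<le> snd s' \<or> snd t' \<le> snd s"
  shows "rect s t \<inter> rect s' t' = {}"
  using assms by (auto simp: rect_def)

lemma staircase_in_quadrant:
  assumes "A 0 = 0" "mono_on {0..n} A" "B (Suc n) = 0" "antimono_on {1..Suc n} B"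
    and "i \<le> n" "1 \<le> l" "l \<le> Suc n"
  shows "(A i, B l) \<in> quadrant"
proof -
  have "A 0 \<le> A i" "B (Suc n) \<le> B l"
    using assms(5-7) by (simp_all add: monotone_onD[OF assms(2)] monotone_onD[OF assms(4)])
  then show ?thesis
    using assms(1,3) by (simp add: quadrant_def)
qed

lemma staircase_is_rect:
  assumes "A 0 = 0" "mono_on {0..n} A" "B (Suc n) = 0" "antimono_on {1..Suc n} B"
    and "1 \<le> i" "i \<le> l" "l \<le> n"
  shows "is_rect (A (i - 1), B (Suc l)) (A i, B l)"
proof -
  have "(A (i - 1), B (Suc l)) \<in> quadrant" "(A i, B l) \<in> quadrant"
    using staircase_in_quadrant[OF assms(1-4)] assms(5-7) by simp_all
  moreover have "A (i - 1) \<le> A i" "B (Suc l) \<le> B l"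
    using assms(5-7) by (simp_all add: monotone_onD[OF assms(2)] monotone_onD[OF assms(4)])
  ultimately show ?thesis
    by (simp add: is_rect_def)
qed

lemma staircase_disjoint:
  assumes "mono_on {0..n} A" "antimono_on {1..Suc n} B"
  shows "disjoint_family_on (\<lambda>(i, l). rect (A (i - 1), B (Suc l)) (A i, B l)) (SIGMA i:{1..n}. {i..n})"
  unfolding disjoint_family_on_def
proof (intro ballI impI)
  fix p q assume "p \<in> (SIGMA i:{1..n}. {i..n})" "q \<in> (SIGMA i:{1..n}. {i..n})" "p \<noteq> q"
  moreover obtain i l i' l' where pq: "p = (i, l)" "q = (i', l')"
    by fastforce
  ultimately have bounds: "1 \<le> i" "i \<le> l" "l \<le> n" "1 \<le> i'" "i' \<le> l'" "l' \<le> n"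
    and "i \<noteq> i' \<or> l \<noteq> l'"
    by auto
  from this(7) consider "i < i'" | "i' < i" | "l < l'" | "l' < l"
    by (metis linorder_neqE_nat)
  then have "A i \<le> A (i' - 1) \<or> A i' \<le> A (i - 1) \<or> B l' \<le> B (Suc l) \<or> B l \<le> B (Suc l')"
  proof cases
    case 1
    then show ?thesis using bounds by (simp add: monotone_onD[OF assms(1)])
  next
    case 2
    then show ?thesis using bounds by (simp add: monotone_onD[OF assms(1)])
  next
    case 3
    then show ?thesis using bounds by (simp add: monotone_onD[OF assms(2)])
  next
    case 4
    then show ?thesis using bounds by (simp add: monotone_onD[OF assms(2)])
  qed
  then have "rect (A (i - 1), B (Suc l)) (A i, B l) \<inter> rect (A (i' - 1), B (Suc l')) (A i', B l') = {}"
    by (intro rect_disjointI) auto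
  then show "(case p of (i, l) \<Rightarrow> rect (A (i - 1), B (Suc l)) (A i, B l)) \<inter>
      (case q of (i, l) \<Rightarrow> rect (A (i - 1), B (Suc l)) (A i, B l)) = {}"
    using pq by simp
qed

lemma staircase_sum_AE:
  assumes levy: "two_param_levy M X"
    and A: "A 0 = 0" "mono_on {0..n} A" and B: "B (Suc n) = 0" "antimono_on {1..Suc n} B"
  shows "AE \<omega> in M. (\<Sum>k=1..n. z k \<bullet> X (A k, B k) \<omega>) =
    (\<Sum>(i, l)\<in>(SIGMA i:{1..n}. {i..n}). (\<Sum>k=i..l. z k) \<bullet> rect_incr X (A (i - 1), B (Suc l)) (A i, B l) \<omega>)"
proof -
  have "AE \<omega> in M. \<forall>p\<in>quadrant. (fst p = 0 \<or> snd p = 0) \<longrightarrow> X p \<omega> = 0"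
    using levy unfolding two_param_levy_def by blast
  then show ?thesis
  proof eventually_elim
    case (elim \<omega>)
    have "X (0, B l) \<omega> = 0" if "1 \<le> l" "l \<le> Suc n" for l
      using staircase_in_quadrant[OF A B, of 0 l] that elim A(1) by auto
    moreover have "X (A i, 0) \<omega> = 0" if "i \<le> n" for i
      using staircase_in_quadrant[OF A B, of i "Suc n"] that elim B(1) by auto
    ultimately have "(\<Sum>k=1..n. z k \<bullet> X (A k, B k) \<omega>) = (\<Sum>i=1..n. \<Sum>l=i..n. (\<Sum>k=i..l. z k) \<bullet>
        (X (A i, B l) \<omega> - X (A (i - 1), B l) \<omega> - X (A i, B (Suc l)) \<omega> + X (A (i - 1), B (Suc l)) \<omega>))"
      using A(1) B(1) by (intro staircase_decomposition[where G="\<lambda>i l. X (A i, B l) \<omega>"]) auto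
    then show ?case
      by (simp add: rect_incr_def sum.Sigma)
  qed
qed

theorem staircase_char_fun:
  fixes M :: "'a measure" and X :: "real \<times> real \<Rightarrow> 'a \<Rightarrow> 'v::euclidean_space"
    and A B :: "nat \<Rightarrow> real"
  assumes levy: "two_param_levy M X" and exponent: "levy_exponent M X \<psi>"
    and A: "A 0 = 0" "mono_on {0..n} A" and B: "B (Suc n) = 0" "antimono_on {1..Suc n} B"
  shows "prob_space.expectation M (\<lambda>\<omega>. cis (\<Sum>k=1..n. z k \<bullet> X (A k, B k) \<omega>)) =
    exp (\<Sum>i=1..n. \<Sum>l=i..n. complex_of_real ((A i - A (i - 1)) * (B l - B (Suc l))) * \<psi> (\<Sum>k=i..l. z k))"
proof -
  interpret prob_space M using levy unfolding two_param_levy_def by blast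
  define P where "P = (SIGMA i:{1..n}. {i..n})"
  define s where "s = (\<lambda>(i, l). (A (i - 1), B (Suc l)))"
  define t where "t = (\<lambda>(i, l). (A i, B l))"
  define w where "w = (\<lambda>(i, l). \<Sum>k=i..l. z k)"
  have rects: "\<forall>p\<in>P. is_rect (s p) (t p)"
    using staircase_is_rect[OF A B] by (auto simp: P_def s_def t_def)
  have disjoint: "disjoint_family_on (\<lambda>p. rect (s p) (t p)) P"
    using staircase_disjoint[OF A(2) B(2)] by (simp add: P_def s_def t_def split_beta')
  have "AE \<omega> in M. (\<Sum>k=1..n. z k \<bullet> X (A k, B k) \<omega>) = (\<Sum>p\<in>P. w p \<bullet> rect_incr X (s p) (t p) \<omega>)"
    using staircase_sum_AE[OF levy A B] by (rule eventually_mono) (simp add: P_def s_def t_def w_def split_beta)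
  moreover have "(\<lambda>\<omega>. \<Sum>k=1..n. z k \<bullet> X (A k, B k) \<omega>) \<in> borel_measurable M"
  proof -
    have "X (A k, B k) \<in> borel_measurable M" if "k \<in> {1..n}" for k
      using levy staircase_in_quadrant[OF A B, of k k] that unfolding two_param_levy_def by auto
    then show ?thesis by measurable
  qed
  moreover have "(\<lambda>\<omega>. \<Sum>p\<in>P. w p \<bullet> rect_incr X (s p) (t p) \<omega>) \<in> borel_measurable M"
  proof -
    have "rect_incr X (s p) (t p) \<in> borel_measurable M" if "p \<in> P" for p
      using rect_incr_measurable[OF levy] rects that by blast
    then show ?thesis by measurable
  qed
  ultimately have "expectation (\<lambda>\<omega>. cis (\<Sum>k=1..n. z k \<bullet> X (A k, B k) \<omega>)) =
      expectation (\<lambda>\<omega>. cis (\<Sum>p\<in>P. w p \<bullet> rect_incr X (s p) (t p) \<omega>))"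
    by (intro integral_cong_AE borel_measurable_cis) (auto elim: eventually_mono)
  also have "\<dots> = exp (\<Sum>p\<in>P. complex_of_real (measure lborel (rect (s p) (t p))) * \<psi> (w p))"
    using rects disjoint by (intro two_param_levy_char_fun_rect_incr levy exponent) (simp add: P_def)
  also have "\<dots> = exp (\<Sum>(i, l)\<in>P. complex_of_real ((A i - A (i - 1)) * (B l - B (Suc l))) * \<psi> (\<Sum>k=i..l. z k))"
  proof (intro arg_cong[where f=exp] sum.cong[OF refl])
    fix p assume "p \<in> P"
    moreover obtain i l where "p = (i, l)" by fastforce
    ultimately show "complex_of_real (measure lborel (rect (s p) (t p))) * \<psi> (w p) =
        (case p of (i, l) \<Rightarrow> complex_of_real ((A i - A (i - 1)) * (B l - B (Suc l))) * \<psi> (\<Sum>k=i..l. z k))"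
      using rects by (auto simp: s_def t_def w_def is_rect_def measure_lborel_rect)
  qed
  also have "\<dots> = exp (\<Sum>i=1..n. \<Sum>l=i..n. complex_of_real ((A i - A (i - 1)) * (B l - B (Suc l))) * \<psi> (\<Sum>k=i..l. z k))"
    by (simp add: P_def sum.Sigma)
  finally show ?thesis .
qed

lemma sum_atLeastAtMost_shift_to_1:
  fixes i n :: nat
  assumes "1 \<le> i" "i \<le> n"
  shows "(\<Sum>l=i..n. g l) = (\<Sum>j=1..n-i+1. g (i + j - 1))"
proof -
  obtain m where m: "i = Suc m" "m < n"
    using assms by (cases i) auto
  have "(\<Sum>j=1..n-i+1. g (i + j - 1)) = (\<Sum>j=1..n-m. g (j + m))"
    using m by (intro sum.cong) (simp_all add: add.commute)
  also have "\<dots> = (\<Sum>l=1+m..(n-m)+m. g l)"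
    by (rule sum.shift_bounds_cl_nat_ivl[symmetric])
  also have "\<dots> = (\<Sum>l=i..n. g l)"
    using m by simp
  finally show ?thesis ..
qed

theorem theorem1:
  fixes M :: "'a measure" and X :: "real \<times> real \<Rightarrow> 'a \<Rightarrow> 'v::euclidean_space"
    and \<psi> :: "'v \<Rightarrow> complex" and T :: "real set" and x y :: "real \<Rightarrow> real"
    and n :: nat and tt :: "nat \<Rightarrow> real" and z :: "nat \<Rightarrow> 'v"
  assumes "two_param_levy M X"
    and "levy_exponent M X \<psi>"
    and "decreasing_path T x y"
    and "n \<ge> 1"
    and "\<forall>k\<in>{1..n}. tt k \<in> T"
    and "\<forall>k\<in>{1..<n}. tt k < tt (Suc k)"
  shows "prob_space.expectation M
           (\<lambda>\<omega>. cis (\<Sum>k=1..n. z k \<bullet> X (x (tt k), y (tt k)) \<omega>)) =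
         exp (\<Sum>i=1..n. \<Sum>j=1..n-i+1.
               complex_of_real ((path_x x tt i - path_x x tt (i - 1)) *
                                (path_y y tt n (i + j - 1) - path_y y tt n (i + j))) *
               \<psi> (\<Sum>k=i..i+j-1. z k))"
proof -
  define A B where "A = path_x x tt" and "B = path_y y tt n"
  have mono: "mono_on {0..n} A" "antimono_on {1..Suc n} B"
    using decreasing_path_staircase[OF assms(3,5,6)] by (simp_all add: A_def B_def)
  have "(\<Sum>k=1..n. z k \<bullet> X (x (tt k), y (tt k)) \<omega>) = (\<Sum>k=1..n. z k \<bullet> X (A k, B k) \<omega>)" for \<omega>
    by (intro sum.cong) (auto simp: A_def B_def path_x_def path_y_def)
  then have "prob_space.expectation M (\<lambda>\<omega>. cis (\<Sum>k=1..n. z k \<bullet> X (x (tt k), y (tt k)) \<omega>)) =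
      prob_space.expectation M (\<lambda>\<omega>. cis (\<Sum>k=1..n. z k \<bullet> X (A k, B k) \<omega>))"
    by simp
  also have "\<dots> = exp (\<Sum>i=1..n. \<Sum>l=i..n.
      complex_of_real ((A i - A (i - 1)) * (B l - B (Suc l))) * \<psi> (\<Sum>k=i..l. z k))"
    by (rule staircase_char_fun[OF assms(1,2) _ mono(1) _ mono(2)]) (simp_all add: A_def B_def path_x_def path_y_def)
  also have "\<dots> = exp (\<Sum>i=1..n. \<Sum>j=1..n-i+1.
      complex_of_real ((A i - A (i - 1)) * (B (i + j - 1) - B (i + j))) * \<psi> (\<Sum>k=i..i+j-1. z k))"
  proof (intro arg_cong[where f=exp] sum.cong[OF refl])
    fix i assume "i \<in> {1..n}"
    then show "(\<Sum>l=i..n. complex_of_real ((A i - A (i - 1)) * (B l - B (Suc l))) * \<psi> (\<Sum>k=i..l. z k)) =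
        (\<Sum>j=1..n-i+1. complex_of_real ((A i - A (i - 1)) * (B (i + j - 1) - B (i + j))) * \<psi> (\<Sum>k=i..i+j-1. z k))"
      by (subst sum_atLeastAtMost_shift_to_1) simp_all
  qed
  finally show ?thesis
    unfolding A_def B_def .
qed

end
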